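(* Read's space $\mathcal R=(c_0,|||\cdot|||)$ is weakly locally uniformly rotund: for every $x$ with $|||x|||=1$ and every sequence $(x_n)$ with $|||x_n|||=1$ and $|||x+x_n|||\to 2$, the sequence $(x_n)$ converges weakly to $x$.
   Context: Let $c_{00}(\mathbb Q)$ be the set of finitely supported sequences with rational coefficients, and let $(u_n)_{n\in\mathbb N}$ be a sequence in $c_{00}(\mathbb Q)$ which lists every element of $c_{00}(\mathbb Q)$ infinitely many times. Let $(a_n)_{n\in\mathbb N}$ be a strictly increasing sequence of positive integers with $a_n>\max\operatorname{supp} u_n$ and $a_n>\|u_n\|_1$ for every $n$. $(e_n)$ denotes the canonical unit vectors and $\langle x,y\rangle=\sum_n x_ny_n$. Read's norm on $c_0$ is $|||x||| = \|x\|_\infty + \sum_{n} 2^{-a_n^2}|\langle x, u_n - e_{a_n}\rangle|$, and Read's space is $\mathcal R=(c_0,|||\cdot|||)$ (real scalars). *)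

theory Defs
  imports "HOL-Analysis.Analysis"
begin

definition c0 :: "(nat \<Rightarrow> real) set" where
  "c0 = {x. x \<longlonglongrightarrow> 0}"

definition c00Q :: "(nat \<Rightarrow> rat) set" where
  "c00Q = {v. finite {k. v k \<noteq> 0}}"

definition l1norm_rat :: "(nat \<Rightarrow> rat) \<Rightarrow> real" where
  "l1norm_rat v = (\<Sum>k\<in>{k. v k \<noteq> 0}. \<bar>real_of_rat (v k)\<bar>)"

text \<open>Standing assumptions on the parameters (u_n) and (a_n) of Read's norm.
  The condition a_n > max supp u_n is written as: every k in the support of u_n
  is below a_n.\<close>
definition read_params :: "(nat \<Rightarrow> nat \<Rightarrow> rat) \<Rightarrow> (nat \<Rightarrow> nat) \<Rightarrow> bool" where
  "read_params u a \<longleftrightarrow>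
     (\<forall>n. u n \<in> c00Q) \<and>
     (\<forall>v\<in>c00Q. infinite {n. u n = v}) \<and>
     strict_mono a \<and> (\<forall>n. 0 < a n) \<and>
     (\<forall>n k. u n k \<noteq> 0 \<longrightarrow> k < a n) \<and>
     (\<forall>n. l1norm_rat (u n) < real (a n))"

text \<open>The pairing <x, u_n - e_(a_n)>; the summand vanishes for k > a_n.\<close>
definition read_pair :: "(nat \<Rightarrow> nat \<Rightarrow> rat) \<Rightarrow> (nat \<Rightarrow> nat) \<Rightarrow> nat \<Rightarrow> (nat \<Rightarrow> real) \<Rightarrow> real" where
  "read_pair u a n x =
     (\<Sum>k\<le>a n. x k * (real_of_rat (u n k) - (if k = a n then 1 else 0)))"

definition sup_norm :: "(nat \<Rightarrow> real) \<Rightarrow> real" where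
  "sup_norm x = (SUP k. \<bar>x k\<bar>)"

definition read_norm :: "(nat \<Rightarrow> nat \<Rightarrow> rat) \<Rightarrow> (nat \<Rightarrow> nat) \<Rightarrow> (nat \<Rightarrow> real) \<Rightarrow> real" where
  "read_norm u a x = sup_norm x +
     (\<Sum>n. (1/2) ^ ((a n)\<^sup>2) * \<bar>read_pair u a n x\<bar>)"

definition read_dual :: "(nat \<Rightarrow> nat \<Rightarrow> rat) \<Rightarrow> (nat \<Rightarrow> nat) \<Rightarrow> ((nat \<Rightarrow> real) \<Rightarrow> real) set" where
  "read_dual u a = {f.
     (\<forall>y\<in>c0. \<forall>z\<in>c0. f (\<lambda>k. y k + z k) = f y + f z) \<and>
     (\<forall>c. \<forall>y\<in>c0. f (\<lambda>k. c * y k) = c * f y) \<and>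
     (\<exists>C. \<forall>y\<in>c0. \<bar>f y\<bar> \<le> C * read_norm u a y)}"

definition read_weakly_conv :: "(nat \<Rightarrow> nat \<Rightarrow> rat) \<Rightarrow> (nat \<Rightarrow> nat) \<Rightarrow> (nat \<Rightarrow> nat \<Rightarrow> real) \<Rightarrow> (nat \<Rightarrow> real) \<Rightarrow> bool" where
  "read_weakly_conv u a xs x \<longleftrightarrow>
     (\<forall>f\<in>read_dual u a. (\<lambda>n. f (xs n)) \<longlonglongrightarrow> f x)"

end

theory Submission
  imports Defs
begin

text \<open>
  Write |||w||| = sup_norm w + P w, where P w is the weighted sum of the |<w, u_m - e_(a_m)>|.
  Norm-one vectors are bounded by 1 in each coordinate, so by a diagonal argument it suffices to
  show that every coordinatewise limit y of a subsequence of (x_n) equals x.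
  Since |||x + x_n||| tends to 2, each term of P is asymptotically additive along x + x_n, so the
  pairings of x and of y with u_m - e_(a_m) never have opposite signs. If y were not a nonnegative
  multiple of x, some v in c_00(Q) would satisfy <x, v> > 0 > 1 + <y, v>; since v = u_m for
  infinitely many m and x(a_m) tends to 0, this contradicts the sign condition. Hence y = l x with
  l >= 0. As P is continuous under bounded coordinatewise convergence, this determines the limits
  of the sup norms of x_n and of x + x_n: lower semicontinuity of the sup norm gives l <= 1, and as
  x vanishes at infinity, the sup norm of x + x_n is asymptotically at most
  max ((1 + l) sup_norm x) (sup_norm x_n), which gives l >= 1.
  Finally, every bounded functional on Read's space is represented by an l^1 sequence, so bounded
  coordinatewise convergence is weak convergence.
\<close>

section \<open>Elementary bounds for Read's norm\<close>

definition read_weight :: "(nat \<Rightarrow> nat) \<Rightarrow> nat \<Rightarrow> real" where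
  "read_weight a m = (1/2) ^ ((a m)\<^sup>2)"

definition read_perturbation :: "(nat \<Rightarrow> nat \<Rightarrow> rat) \<Rightarrow> (nat \<Rightarrow> nat) \<Rightarrow> (nat \<Rightarrow> real) \<Rightarrow> real" where
  "read_perturbation u a w = (\<Sum>m. read_weight a m * \<bar>read_pair u a m w\<bar>)"

lemma read_norm_eq: "read_norm u a w = sup_norm w + read_perturbation u a w"
  by (simp add: read_norm_def read_perturbation_def read_weight_def)

lemma read_weight_pos: "0 < read_weight a m"
  by (simp add: read_weight_def)

definition c00Q_pairing :: "(nat \<Rightarrow> real) \<Rightarrow> (nat \<Rightarrow> rat) \<Rightarrow> real" where
  "c00Q_pairing w v = (\<Sum>k\<in>{k. v k \<noteq> 0}. w k * real_of_rat (v k))"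

lemma c00Q_pairing_eq_sum:
  assumes "finite A" "{k. v k \<noteq> 0} \<subseteq> A"
  shows "c00Q_pairing w v = (\<Sum>k\<in>A. w k * real_of_rat (v k))"
  unfolding c00Q_pairing_def using assms by (intro sum.mono_neutral_left) auto

lemma read_params_support:
  assumes "read_params u a"
  shows "finite {k. u m k \<noteq> 0}" "{k. u m k \<noteq> 0} \<subseteq> {..<a m}"
  using assms by (auto simp: read_params_def c00Q_def)

lemma read_params_le_a: "read_params u a \<Longrightarrow> m \<le> a m"
  by (simp add: read_params_def seq_suble)

lemma read_pair_eq_pairing:
  assumes "read_params u a"
  shows "read_pair u a m w = c00Q_pairing w (u m) - w (a m)"
proof -
  have "read_pair u a m w = (\<Sum>k\<le>a m. w k * real_of_rat (u m k))
      - (\<Sum>k\<le>a m. w k * (if k = a m then 1 else 0))"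
    unfolding read_pair_def by (simp add: right_diff_distrib sum_subtractf)
  also have "(\<Sum>k\<le>a m. w k * (if k = a m then 1 else 0)) = w (a m)"
    by (simp add: if_distrib[of "\<lambda>t. w _ * t"] cong: if_cong)
  also have "(\<Sum>k\<le>a m. w k * real_of_rat (u m k)) = c00Q_pairing w (u m)"
    using read_params_support[OF assms, of m] by (intro c00Q_pairing_eq_sum[symmetric]) auto
  finally show ?thesis by simp
qed

lemma read_pair_add: "read_pair u a m (\<lambda>k. x k + y k) = read_pair u a m x + read_pair u a m y"
  by (simp add: read_pair_def distrib_right sum.distrib)

lemma read_pair_scale: "read_pair u a m (\<lambda>k. c * x k) = c * read_pair u a m x"
  by (simp add: read_pair_def sum_distrib_left mult.assoc)

lemma tendsto_read_pair:
  assumes "\<And>k. (\<lambda>n. z n k) \<longlonglongrightarrow> y k"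
  shows "(\<lambda>n. read_pair u a m (z n)) \<longlonglongrightarrow> read_pair u a m y"
  unfolding read_pair_def by (intro tendsto_intros assms)

lemma abs_read_pair_le:
  assumes "read_params u a" and "\<forall>k. \<bar>w k\<bar> \<le> S"
  shows "\<bar>read_pair u a m w\<bar> \<le> (real (a m) + 1) * S"
proof -
  have S: "0 \<le> S" using assms(2) by (meson abs_ge_zero order_trans)
  have "\<bar>read_pair u a m w\<bar> \<le> \<bar>c00Q_pairing w (u m)\<bar> + \<bar>w (a m)\<bar>"
    unfolding read_pair_eq_pairing[OF assms(1)] by (rule abs_triangle_ineq4)
  also have "\<bar>c00Q_pairing w (u m)\<bar> \<le> (\<Sum>k\<in>{k. u m k \<noteq> 0}. S * \<bar>real_of_rat (u m k)\<bar>)"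
    unfolding c00Q_pairing_def
    by (rule order_trans[OF sum_abs sum_mono]) (simp add: abs_mult assms(2) mult_right_mono)
  also have "\<dots> = S * l1norm_rat (u m)"
    by (simp add: l1norm_rat_def sum_distrib_left)
  also have "\<dots> \<le> S * real (a m)"
    using assms(1) S by (intro mult_left_mono) (auto simp: read_params_def less_imp_le)
  finally show ?thesis using assms(2)[rule_format, of "a m"] by (simp add: algebra_simps)
qed

lemma two_pow_square_bound: "(t + 1) * 2 ^ t \<le> 2 * 2 ^ (t * t :: nat)"
proof -
  have "t + 1 \<le> 2 ^ t" by (induction t) auto
  then have "(t + 1) * 2 ^ t \<le> 2 ^ t * 2 ^ t" by (rule mult_le_mono1)
  also have "\<dots> = 2 ^ (t + t)" by (simp add: power_add)
  also have "\<dots> \<le> 2 ^ (t * t + 1)"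
  proof (rule power_increasing)
    show "t + t \<le> t * t + 1"
      by (cases "t \<le> 1") (auto simp: le_Suc_eq intro: order_trans[OF _ mult_le_mono1[of 2 t t]])
  qed simp
  finally show ?thesis by simp
qed

lemma read_weight_le:
  assumes "read_params u a"
  shows "(real (a m) + 1) * read_weight a m \<le> 2 * (1/2) ^ m"
proof -
  let ?t = "a m"
  have "(real ?t + 1) * 2 ^ ?t \<le> 2 * 2 ^ (?t * ?t)"
    using two_pow_square_bound[of ?t] by (metis (mono_tags) of_nat_1 of_nat_add of_nat_le_iff
        of_nat_mult of_nat_numeral of_nat_power)
  then have "(real ?t + 1) * read_weight a m \<le> 2 * (1/2) ^ ?t"
    by (simp add: read_weight_def power2_eq_square power_one_over field_simps)
  also have "(1/2::real) ^ ?t \<le> (1/2) ^ m"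
    using read_params_le_a[OF assms] by (simp add: power_decreasing)
  finally show ?thesis by simp
qed

lemma summable_read_weight:
  assumes "read_params u a"
  shows "summable (\<lambda>m. (real (a m) + 1) * read_weight a m)"
proof (rule summable_comparison_test)
  show "\<exists>N. \<forall>m\<ge>N. norm ((real (a m) + 1) * read_weight a m) \<le> 2 * (1/2) ^ m"
    using read_weight_le[OF assms] read_weight_pos[of a] by (simp add: less_imp_le)
  show "summable (\<lambda>m. 2 * (1/2::real) ^ m)"
    by (intro summable_mult summable_geometric) simp
qed

lemma bounded_c0: "w \<in> c0 \<Longrightarrow> \<exists>S. \<forall>k. \<bar>w k\<bar> \<le> S"
  unfolding c0_def using convergent_imp_Bseq[of w] by (auto simp: convergent_def Bseq_def)

lemma abs_le_sup_norm: "\<forall>k. \<bar>w k\<bar> \<le> S \<Longrightarrow> \<bar>w k\<bar> \<le> sup_norm w"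
  unfolding sup_norm_def by (intro cSUP_upper bdd_aboveI2) auto

lemma sup_norm_le: "\<forall>k. \<bar>w k\<bar> \<le> S \<Longrightarrow> sup_norm w \<le> S"
  unfolding sup_norm_def by (intro cSUP_least) auto

lemma sup_norm_nonneg: "\<forall>k. \<bar>w k\<bar> \<le> S \<Longrightarrow> 0 \<le> sup_norm w"
  by (rule order_trans[OF abs_ge_zero abs_le_sup_norm])

lemma sup_norm_add_le:
  assumes "\<forall>k. \<bar>w k\<bar> \<le> S" "\<forall>k. \<bar>y k\<bar> \<le> T"
  shows "sup_norm (\<lambda>k. w k + y k) \<le> sup_norm w + sup_norm y"
  using abs_le_sup_norm[OF assms(1)] abs_le_sup_norm[OF assms(2)]
  by (intro sup_norm_le allI) (meson abs_triangle_ineq add_mono order_trans)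

lemma sup_norm_scale:
  assumes "\<forall>k. \<bar>w k\<bar> \<le> S" "0 \<le> c"
  shows "sup_norm (\<lambda>k. c * w k) = c * sup_norm w"
proof (rule antisym)
  show "sup_norm (\<lambda>k. c * w k) \<le> c * sup_norm w"
    using abs_le_sup_norm[OF assms(1)] assms(2)
    by (intro sup_norm_le) (simp add: abs_mult mult_left_mono)
  show "c * sup_norm w \<le> sup_norm (\<lambda>k. c * w k)"
  proof (cases "c = 0")
    case True
    then show ?thesis by (simp add: sup_norm_def)
  next
    case False
    have "\<forall>k. \<bar>c * w k\<bar> \<le> c * S"
      using assms by (simp add: abs_mult mult_left_mono)
    then have "\<bar>w k\<bar> \<le> sup_norm (\<lambda>k. c * w k) / c" for k
      using abs_le_sup_norm[of "\<lambda>k. c * w k" "c * S" k] False assms(2)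
      by (simp add: abs_mult field_simps)
    then have "sup_norm w \<le> sup_norm (\<lambda>k. c * w k) / c" by (intro sup_norm_le) auto
    then show ?thesis using False assms(2) by (simp add: field_simps)
  qed
qed

lemma read_perturbation_term_le:
  assumes "read_params u a" "\<forall>k. \<bar>w k\<bar> \<le> S"
  shows "read_weight a m * \<bar>read_pair u a m w\<bar> \<le> (real (a m) + 1) * read_weight a m * S"
  using abs_read_pair_le[OF assms, of m] read_weight_pos[of a m]
  by (simp add: mult_left_mono mult_ac)

lemma summable_read_perturbation:
  assumes "read_params u a" "\<forall>k. \<bar>w k\<bar> \<le> S"
  shows "summable (\<lambda>m. read_weight a m * \<bar>read_pair u a m w\<bar>)"
proof (rule summable_comparison_test)
  show "\<exists>N. \<forall>m\<ge>N. norm (read_weight a m * \<bar>read_pair u a m w\<bar>)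
      \<le> (real (a m) + 1) * read_weight a m * S"
    using read_perturbation_term_le[OF assms] read_weight_pos[of a] by (simp add: less_imp_le)
  show "summable (\<lambda>m. (real (a m) + 1) * read_weight a m * S)"
    by (intro summable_mult2 summable_read_weight[OF assms(1)])
qed

lemma read_perturbation_nonneg:
  assumes "read_params u a" "\<forall>k. \<bar>w k\<bar> \<le> S"
  shows "0 \<le> read_perturbation u a w"
  unfolding read_perturbation_def
  using read_weight_pos[of a] by (intro suminf_nonneg summable_read_perturbation[OF assms]) (simp add: less_imp_le)

lemma read_perturbation_le:
  assumes "read_params u a" "\<forall>k. \<bar>w k\<bar> \<le> S"
  shows "read_perturbation u a w \<le> 4 * S"
proof -
  have S: "0 \<le> S" using assms(2) by (meson abs_ge_zero order_trans)
  have "read_perturbation u a w \<le> (\<Sum>m. 2 * S * (1/2::real) ^ m)"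
    unfolding read_perturbation_def
  proof (rule suminf_le)
    fix m
    have "read_weight a m * \<bar>read_pair u a m w\<bar> \<le> (real (a m) + 1) * read_weight a m * S"
      by (rule read_perturbation_term_le[OF assms])
    also have "\<dots> \<le> 2 * (1/2) ^ m * S"
      by (intro mult_right_mono read_weight_le[OF assms(1)] S)
    finally show "read_weight a m * \<bar>read_pair u a m w\<bar> \<le> 2 * S * (1/2) ^ m"
      by (simp add: mult_ac)
  qed (auto intro: summable_read_perturbation[OF assms] summable_mult summable_geometric)
  also have "\<dots> = 4 * S"
    by (subst suminf_mult) (auto simp: suminf_geometric)
  finally show ?thesis .
qed

lemma read_norm_nonneg:
  assumes "read_params u a" "\<forall>k. \<bar>w k\<bar> \<le> S"
  shows "0 \<le> read_norm u a w"
  using sup_norm_nonneg[OF assms(2)] read_perturbation_nonneg[OF assms] by (simp add: read_norm_eq)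

lemma read_norm_le:
  assumes "read_params u a" "\<forall>k. \<bar>w k\<bar> \<le> S"
  shows "read_norm u a w \<le> 5 * S"
  using read_perturbation_le[OF assms] sup_norm_le[OF assms(2)] by (simp add: read_norm_eq)

lemma read_norm_zero: "read_norm u a (\<lambda>k. 0) = 0"
  by (simp add: read_norm_def sup_norm_def read_pair_def)

lemma read_norm_one_bounded:
  assumes "read_params u a" "w \<in> c0" "read_norm u a w = 1"
  shows "\<forall>k. \<bar>w k\<bar> \<le> 1"
proof -
  obtain S where S: "\<forall>k. \<bar>w k\<bar> \<le> S" using bounded_c0[OF assms(2)] by blast
  have "sup_norm w \<le> 1"
    using read_perturbation_nonneg[OF assms(1) S] assms(3) by (simp add: read_norm_eq)
  then show ?thesis using abs_le_sup_norm[OF S] by (meson order_trans)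
qed

lemma read_perturbation_scale:
  assumes "read_params u a" "\<forall>k. \<bar>w k\<bar> \<le> S"
  shows "read_perturbation u a (\<lambda>k. c * w k) = \<bar>c\<bar> * read_perturbation u a w"
  unfolding read_perturbation_def read_pair_scale
  by (subst suminf_mult[OF summable_read_perturbation[OF assms], symmetric])
    (simp add: abs_mult mult_ac)

lemma tendsto_read_perturbation:
  assumes "read_params u a" "\<forall>n k. \<bar>z n k\<bar> \<le> B" "\<And>k. (\<lambda>n. z n k) \<longlonglongrightarrow> y k"
  shows "(\<lambda>n. read_perturbation u a (z n)) \<longlonglongrightarrow> read_perturbation u a y"
  unfolding read_perturbation_def
proof (rule tannerys_theorem[THEN conjunct2, THEN conjunct2])
  show "(\<lambda>n. read_weight a m * \<bar>read_pair u a m (z n)\<bar>)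
      \<longlonglongrightarrow> read_weight a m * \<bar>read_pair u a m y\<bar>" for m
    by (intro tendsto_intros tendsto_read_pair assms)
  show "\<forall>\<^sub>F (m, n) in sequentially \<times>\<^sub>F sequentially.
      norm (read_weight a m * \<bar>read_pair u a m (z n)\<bar>) \<le> (real (a m) + 1) * read_weight a m * B"
    using read_perturbation_term_le[OF assms(1)] assms(2) read_weight_pos[of a]
    by (intro always_eventually) (auto simp: less_imp_le)
  show "summable (\<lambda>m. (real (a m) + 1) * read_weight a m * B)"
    by (intro summable_mult2 summable_read_weight[OF assms(1)])
qed auto

lemma read_perturbation_defect_sums:
  assumes "read_params u a" "\<forall>k. \<bar>w k\<bar> \<le> S" "\<forall>k. \<bar>y k\<bar> \<le> T"
  shows "(\<lambda>m. read_weight a m *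
      (\<bar>read_pair u a m w\<bar> + \<bar>read_pair u a m y\<bar> - \<bar>read_pair u a m w + read_pair u a m y\<bar>))
    sums (read_perturbation u a w + read_perturbation u a y - read_perturbation u a (\<lambda>k. w k + y k))"
proof -
  have "\<forall>k. \<bar>w k + y k\<bar> \<le> S + T"
    using assms(2,3) by (meson abs_triangle_ineq add_mono order_trans)
  from summable_read_perturbation[OF assms(1) this]
  have "summable (\<lambda>m. read_weight a m * \<bar>read_pair u a m w + read_pair u a m y\<bar>)"
    by (simp add: read_pair_add)
  from sums_diff[OF sums_add[OF summable_read_perturbation[OF assms(1,2), THEN summable_sums]
        summable_read_perturbation[OF assms(1,3), THEN summable_sums]] this[THEN summable_sums]]
  show ?thesis
    by (simp add: read_perturbation_def read_pair_add algebra_simps)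
qed

lemma read_pair_defect_le:
  assumes "read_params u a" "\<forall>k. \<bar>w k\<bar> \<le> S" "\<forall>k. \<bar>y k\<bar> \<le> T"
  shows "read_weight a m *
      (\<bar>read_pair u a m w\<bar> + \<bar>read_pair u a m y\<bar> - \<bar>read_pair u a m w + read_pair u a m y\<bar>)
    \<le> read_norm u a w + read_norm u a y - read_norm u a (\<lambda>k. w k + y k)"
proof -
  let ?d = "\<lambda>m. read_weight a m *
      (\<bar>read_pair u a m w\<bar> + \<bar>read_pair u a m y\<bar> - \<bar>read_pair u a m w + read_pair u a m y\<bar>)"
  note sums = read_perturbation_defect_sums[OF assms]
  have "0 \<le> ?d i" for i
    using read_weight_pos[of a i] abs_triangle_ineq[of "read_pair u a i w" "read_pair u a i y"]
    by simp
  then have "sum ?d {m} \<le> suminf ?d"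
    using sums by (intro sum_le_suminf) (auto simp: sums_iff)
  then show ?thesis
    using sums sup_norm_add_le[OF assms(2,3)] by (simp add: sums_iff read_norm_eq)
qed

section \<open>Separation by finitely supported rational vectors\<close>

lemma exists_c00Q_approx_pairing:
  assumes "finite A" "0 < e"
  obtains v where "v \<in> c00Q"
    "\<And>w. \<forall>k. \<bar>w k\<bar> \<le> 1 \<Longrightarrow> \<bar>c00Q_pairing w v - (\<Sum>k\<in>A. w k * p k)\<bar> < e"
proof -
  define \<delta> where "\<delta> = e / (real (card A) + 1)"
  have \<delta>: "0 < \<delta>" "real (card A) * \<delta> < e"
    using assms(2) by (auto simp: \<delta>_def field_simps)
  have "\<exists>q. \<bar>real_of_rat q - p k\<bar> < \<delta>" for k
  proof -
    obtain r where "r \<in> \<rat>" "p k - \<delta> < r" "r < p k + \<delta>"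
      using Rats_dense_in_real[of "p k - \<delta>" "p k + \<delta>"] \<delta>(1) by auto
    moreover from \<open>r \<in> \<rat>\<close> obtain q where "r = real_of_rat q" by (rule Rats_cases)
    ultimately show ?thesis by (intro exI[of _ q]) (simp add: abs_less_iff)
  qed
  then obtain q where q: "\<And>k. \<bar>real_of_rat (q k) - p k\<bar> < \<delta>" by metis
  define v where "v k = (if k \<in> A then q k else 0)" for k
  have supp: "{k. v k \<noteq> 0} \<subseteq> A" by (auto simp: v_def)
  show ?thesis
  proof
    show "v \<in> c00Q" using supp assms(1) by (auto simp: c00Q_def intro: finite_subset)
    fix w :: "nat \<Rightarrow> real" assume w: "\<forall>k. \<bar>w k\<bar> \<le> 1"
    have "\<bar>c00Q_pairing w v - (\<Sum>k\<in>A. w k * p k)\<bar> = \<bar>\<Sum>k\<in>A. w k * (real_of_rat (q k) - p k)\<bar>"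
      by (simp add: c00Q_pairing_eq_sum[OF assms(1) supp] v_def sum_subtractf algebra_simps)
    also have "\<dots> \<le> (\<Sum>k\<in>A. \<delta>)"
      using w q
      by (intro order_trans[OF sum_abs sum_mono]) (simp add: abs_mult mult_le_one less_imp_le
          mult_mono[of _ 1 _ \<delta>, simplified])
    also have "\<dots> < e" using \<delta>(2) by simp
    finally show "\<bar>c00Q_pairing w v - (\<Sum>k\<in>A. w k * p k)\<bar> < e" .
  qed
qed

lemma exists_finite_separating:
  fixes x y :: "nat \<Rightarrow> real"
  assumes xj: "x j \<noteq> 0" and not_multiple: "\<not> (\<exists>l\<ge>0. \<forall>k. y k = l * x k)"
  obtains A p where "finite A" "0 < (\<Sum>k\<in>A. x k * p k)" "(\<Sum>k\<in>A. y k * p k) < -1"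
proof (cases "\<exists>i. y i * x j \<noteq> y j * x i")
  case True
  then obtain i where "y i * x j \<noteq> y j * x i" by blast
  define D where "D = x i * y j - x j * y i"
  have "D \<noteq> 0" "i \<noteq> j" using \<open>y i * x j \<noteq> y j * x i\<close> by (auto simp: D_def algebra_simps)
  \<comment> \<open>Cramer's rule for \<open>x i p i + x j p j = 1\<close> and \<open>y i p i + y j p j = -2\<close>\<close>
  define p where "p k = (if k = i then y j + 2 * x j else if k = j then - 2 * x i - y i else 0) / D"
    for k
  have "x i * (y j + 2 * x j) + x j * (- 2 * x i - y i) = D"
    and "y i * (y j + 2 * x j) + y j * (- 2 * x i - y i) = - 2 * D"
    by (simp_all add: D_def algebra_simps)
  then have "(\<Sum>k\<in>{i, j}. x k * p k) = 1" "(\<Sum>k\<in>{i, j}. y k * p k) = -2"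
    using \<open>i \<noteq> j\<close> \<open>D \<noteq> 0\<close> by (simp_all add: p_def add_divide_distrib[symmetric])
  then show ?thesis by (intro that[of "{i, j}" p]) auto
next
  case False
  define l where "l = y j / x j"
  have "\<forall>k. y k = l * x k" using False xj by (auto simp: l_def field_simps)
  then have "l < 0" "\<forall>k. y k = l * x k" using not_multiple by (auto simp: not_le)
  define p where "p k = 2 / (- l * x j)" for k :: nat
  have "(\<Sum>k\<in>{j}. x k * p k) = - 2 / l" "(\<Sum>k\<in>{j}. y k * p k) = -2"
    using \<open>l < 0\<close> \<open>\<forall>k. y k = l * x k\<close> xj by (auto simp: p_def field_simps)
  moreover have "0 < - 2 / l" using \<open>l < 0\<close> by (simp add: field_simps)
  ultimately show ?thesis by (intro that[of "{j}" p]) simp_all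
qed

lemma exists_c00Q_separating:
  assumes "x j \<noteq> 0" "\<forall>k. \<bar>x k\<bar> \<le> 1" "\<forall>k. \<bar>y k\<bar> \<le> 1"
    and "\<not> (\<exists>l\<ge>0. \<forall>k. y k = l * x k)"
  obtains v where "v \<in> c00Q" "0 < c00Q_pairing x v" "c00Q_pairing y v < -1"
proof -
  obtain A p where A: "finite A" "0 < (\<Sum>k\<in>A. x k * p k)" "(\<Sum>k\<in>A. y k * p k) < -1"
    using exists_finite_separating[OF assms(1,4)] by blast
  define e where "e = min (\<Sum>k\<in>A. x k * p k) (-1 - (\<Sum>k\<in>A. y k * p k))"
  have "0 < e" using A by (simp add: e_def)
  obtain v where v: "v \<in> c00Q"
    "\<And>w. \<forall>k. \<bar>w k\<bar> \<le> 1 \<Longrightarrow> \<bar>c00Q_pairing w v - (\<Sum>k\<in>A. w k * p k)\<bar> < e"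
    using exists_c00Q_approx_pairing[OF A(1) \<open>0 < e\<close>] by blast
  show ?thesis
    using v(2)[OF assms(2)] v(2)[OF assms(3)]
    by (intro that[OF v(1)]) (auto simp: e_def abs_less_iff)
qed

section \<open>Coordinatewise limits\<close>

lemma read_pairs_same_sign:
  assumes P: "read_params u a"
    and x: "x \<in> c0" "read_norm u a x = 1"
    and z: "\<forall>n. z n \<in> c0" "\<forall>n. read_norm u a (z n) = 1"
    and lim: "(\<lambda>n. read_norm u a (\<lambda>k. x k + z n k)) \<longlonglongrightarrow> 2"
    and conv: "\<And>k. (\<lambda>n. z n k) \<longlonglongrightarrow> y k"
  shows "0 \<le> read_pair u a m x * read_pair u a m y"
proof -
  let ?D = "\<lambda>w. \<bar>read_pair u a m x\<bar> + \<bar>read_pair u a m w\<bar> - \<bar>read_pair u a m x + read_pair u a m w\<bar>"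
  have "read_weight a m * ?D (z n) \<le> 2 - read_norm u a (\<lambda>k. x k + z n k)" for n
    using read_pair_defect_le[OF P read_norm_one_bounded[OF P x] read_norm_one_bounded[OF P]] x z
    by simp
  moreover have "(\<lambda>n. read_weight a m * ?D (z n)) \<longlonglongrightarrow> read_weight a m * ?D y"
    by (intro tendsto_intros tendsto_read_pair conv)
  moreover have "(\<lambda>n. 2 - read_norm u a (\<lambda>k. x k + z n k)) \<longlonglongrightarrow> 0"
    using tendsto_diff[OF tendsto_const[of 2] lim] by simp
  ultimately have "read_weight a m * ?D y \<le> 0"
    by (intro LIMSEQ_le) auto
  then have "?D y \<le> 0"
    using read_weight_pos[of a m] by (simp add: mult_le_0_iff)
  then show ?thesis
    by (smt (verit) mult_nonneg_nonneg mult_nonpos_nonpos)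
qed

lemma read_pairs_same_sign_imp_nonneg_multiple:
  assumes P: "read_params u a" and x: "x \<in> c0" "x j \<noteq> 0" "\<forall>k. \<bar>x k\<bar> \<le> 1"
    and y: "\<forall>k. \<bar>y k\<bar> \<le> 1"
    and same_sign: "\<And>m. 0 \<le> read_pair u a m x * read_pair u a m y"
  obtains l where "0 \<le> l" "y = (\<lambda>k. l * x k)"
proof -
  have "\<exists>l\<ge>0. \<forall>k. y k = l * x k"
  proof (rule ccontr)
    assume "\<not> (\<exists>l\<ge>0. \<forall>k. y k = l * x k)"
    then obtain v where v: "v \<in> c00Q" "0 < c00Q_pairing x v" "c00Q_pairing y v < -1"
      using exists_c00Q_separating[OF x(2,3) y] by blast
    \<comment> \<open>\<open>v\<close> recurs as \<open>u m\<close> for some \<open>m\<close> so large that \<open>x (a m)\<close> is negligible\<close>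
    obtain N where N: "\<forall>k\<ge>N. \<bar>x k\<bar> < c00Q_pairing x v"
      using x(1) v(2) unfolding c0_def LIMSEQ_iff by auto
    have "infinite {m. u m = v}" using P v(1) by (simp add: read_params_def)
    then obtain m where m: "N \<le> m" "u m = v" by (auto simp: infinite_nat_iff_unbounded_le)
    have "\<bar>x (a m)\<bar> < c00Q_pairing x v" using N m(1) read_params_le_a[OF P, of m] by simp
    then have "0 < read_pair u a m x" using read_pair_eq_pairing[OF P] m(2) by simp
    moreover have "read_pair u a m y < 0"
      using read_pair_eq_pairing[OF P, of m y] m(2) v(3) y[rule_format, of "a m"]
      by (simp add: abs_le_iff)
    ultimately show False
      using same_sign[of m] mult_pos_neg[of "read_pair u a m x" "read_pair u a m y"] by linarith
  qed
  then show ?thesis using that by blast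
qed

lemma sup_norm_le_of_tendsto:
  assumes "\<forall>n k. \<bar>z n k\<bar> \<le> B" "\<And>k. (\<lambda>n. z n k) \<longlonglongrightarrow> y k"
    and "(\<lambda>n. sup_norm (z n)) \<longlonglongrightarrow> S"
  shows "sup_norm y \<le> S"
proof (rule sup_norm_le, rule allI)
  fix k
  have "(\<lambda>n. \<bar>z n k\<bar>) \<longlonglongrightarrow> \<bar>y k\<bar>" by (intro tendsto_intros assms)
  then show "\<bar>y k\<bar> \<le> S"
    using assms(3) by (rule LIMSEQ_le) (use abs_le_sup_norm assms(1) in blast)
qed

lemma tendsto_sup_norm_add_le:
  assumes x: "x \<in> c0" and z: "\<forall>n k. \<bar>z n k\<bar> \<le> B" "\<And>k. (\<lambda>n. z n k) \<longlonglongrightarrow> y k"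
    and S: "(\<lambda>n. sup_norm (z n)) \<longlonglongrightarrow> S"
    and T: "(\<lambda>n. sup_norm (\<lambda>k. x k + z n k)) \<longlonglongrightarrow> T"
  shows "T \<le> max (sup_norm (\<lambda>k. x k + y k)) S"
proof (rule field_le_epsilon)
  fix \<epsilon> :: real assume "0 < \<epsilon>"
  let ?M = "sup_norm (\<lambda>k. x k + y k)"
  obtain Sx where Sx: "\<forall>k. \<bar>x k\<bar> \<le> Sx" using bounded_c0[OF x] by blast
  have "\<bar>y k\<bar> \<le> B" for k
    by (rule LIMSEQ_le_const2[OF tendsto_rabs[OF z(2)]]) (use z(1) in auto)
  then have xy: "\<forall>k. \<bar>x k + y k\<bar> \<le> Sx + B"
    using Sx by (meson abs_triangle_ineq add_mono order_trans)
  obtain K where K: "\<forall>k\<ge>K. \<bar>x k\<bar> < \<epsilon>"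
    using x \<open>0 < \<epsilon>\<close> unfolding c0_def LIMSEQ_iff by auto
  \<comment> \<open>the finitely many coordinates below \<open>K\<close> converge, the others are dominated by \<open>z n\<close>\<close>
  have "\<forall>k\<in>{..<K}. eventually (\<lambda>n. \<bar>x k + z n k\<bar> < ?M + \<epsilon>) sequentially"
  proof
    fix k
    have "(\<lambda>n. \<bar>x k + z n k\<bar>) \<longlonglongrightarrow> \<bar>x k + y k\<bar>" by (intro tendsto_intros z)
    moreover have "\<bar>x k + y k\<bar> < ?M + \<epsilon>" using abs_le_sup_norm[OF xy, of k] \<open>0 < \<epsilon>\<close> by simp
    ultimately show "eventually (\<lambda>n. \<bar>x k + z n k\<bar> < ?M + \<epsilon>) sequentially"
      by (rule order_tendstoD)
  qed
  then have "eventually (\<lambda>n. \<forall>k\<in>{..<K}. \<bar>x k + z n k\<bar> < ?M + \<epsilon>) sequentially"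
    by (rule eventually_ball_finite[rotated]) simp
  then have "eventually (\<lambda>n. sup_norm (\<lambda>k. x k + z n k) \<le> max ?M (sup_norm (z n)) + \<epsilon>) sequentially"
  proof eventually_elim
    case (elim n)
    have "\<bar>x k + z n k\<bar> \<le> max ?M (sup_norm (z n)) + \<epsilon>" for k
    proof (cases "k < K")
      case True
      then have "\<bar>x k + z n k\<bar> < ?M + \<epsilon>" using elim by simp
      moreover have "?M \<le> max ?M (sup_norm (z n))" by simp
      ultimately show ?thesis by linarith
    next
      case False
      then have "\<bar>x k\<bar> < \<epsilon>" using K by simp
      moreover have "\<bar>z n k\<bar> \<le> sup_norm (z n)" using abs_le_sup_norm z(1) by blast
      moreover have "sup_norm (z n) \<le> max ?M (sup_norm (z n))" by simp
      ultimately show ?thesis using abs_triangle_ineq[of "x k" "z n k"] by linarith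
    qed
    then show ?case by (intro sup_norm_le) auto
  qed
  moreover have "(\<lambda>n. max ?M (sup_norm (z n)) + \<epsilon>) \<longlonglongrightarrow> max ?M S + \<epsilon>"
    by (intro tendsto_intros S)
  ultimately show "T \<le> max ?M S + \<epsilon>"
    using T by (intro tendsto_le[OF trivial_limit_sequentially]) auto
qed

lemma coordinatewise_limit_eq:
  assumes P: "read_params u a"
    and x: "x \<in> c0" "read_norm u a x = 1"
    and z: "\<forall>n. z n \<in> c0" "\<forall>n. read_norm u a (z n) = 1"
    and lim: "(\<lambda>n. read_norm u a (\<lambda>k. x k + z n k)) \<longlonglongrightarrow> 2"
    and conv: "\<And>k. (\<lambda>n. z n k) \<longlonglongrightarrow> y k"
  shows "y = x"
proof -
  have xb: "\<forall>k. \<bar>x k\<bar> \<le> 1" by (rule read_norm_one_bounded[OF P x])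
  have zb: "\<forall>n k. \<bar>z n k\<bar> \<le> 1" using read_norm_one_bounded[OF P] z by blast
  have yb: "\<forall>k. \<bar>y k\<bar> \<le> 1"
    using zb by (intro allI LIMSEQ_le_const2[OF tendsto_rabs[OF conv]]) auto
  have xzb: "\<forall>n k. \<bar>x k + z n k\<bar> \<le> 2"
    using xb zb by (metis abs_triangle_ineq add_mono one_add_one order_trans)
  define M where "M = sup_norm x"
  define R where "R = read_perturbation u a x"
  have MR: "M + R = 1" using x(2) by (simp add: M_def R_def read_norm_eq)
  have "x \<noteq> (\<lambda>k. 0)" using x(2) read_norm_zero[of u a] by auto
  then obtain j where "x j \<noteq> 0" by auto
  then have "0 < M" using abs_le_sup_norm[OF xb, of j] by (simp add: M_def)
  obtain l where "0 \<le> l" and y: "y = (\<lambda>k. l * x k)"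
    using read_pairs_same_sign_imp_nonneg_multiple[OF P x(1) \<open>x j \<noteq> 0\<close> xb yb
        read_pairs_same_sign[OF P x z lim conv]] .
  have xy: "(\<lambda>k. x k + y k) = (\<lambda>k. (1 + l) * x k)" by (simp add: y algebra_simps)
  have "(\<lambda>n. read_perturbation u a (z n)) \<longlonglongrightarrow> l * R"
    using tendsto_read_perturbation[OF P zb conv] read_perturbation_scale[OF P xb, of l] \<open>0 \<le> l\<close>
    by (simp add: y R_def)
  moreover have "sup_norm (z n) = 1 - read_perturbation u a (z n)" for n
    using z(2)[rule_format, of n] by (simp add: read_norm_eq)
  ultimately have S: "(\<lambda>n. sup_norm (z n)) \<longlonglongrightarrow> 1 - l * R"
    using tendsto_diff[OF tendsto_const[of 1]] by simp
  have "(\<lambda>n. read_perturbation u a (\<lambda>k. x k + z n k)) \<longlonglongrightarrow> (1 + l) * R"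
    using tendsto_read_perturbation[OF P xzb tendsto_add[OF tendsto_const conv]]
      read_perturbation_scale[OF P xb, of "1 + l"] \<open>0 \<le> l\<close>
    by (simp add: xy R_def)
  from tendsto_diff[OF lim this]
  have T: "(\<lambda>n. sup_norm (\<lambda>k. x k + z n k)) \<longlonglongrightarrow> 2 - (1 + l) * R"
    by (simp add: read_norm_eq)
  \<comment> \<open>the first bound forces \<open>l \<le> 1\<close>, the second (as \<open>M > 0\<close>) forces \<open>l \<ge> 1\<close>\<close>
  have "l * M \<le> 1 - l * R"
    using sup_norm_le_of_tendsto[OF zb conv S] sup_norm_scale[OF xb \<open>0 \<le> l\<close>] by (simp add: y M_def)
  moreover have "2 - (1 + l) * R \<le> max ((1 + l) * M) (1 - l * R)"
    using tendsto_sup_norm_add_le[OF x(1) zb conv S T] sup_norm_scale[OF xb, of "1 + l"] \<open>0 \<le> l\<close>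
    by (simp add: xy M_def)
  moreover have "l * M + l * R = l" using MR by (simp add: ring_distribs(1)[symmetric])
  ultimately have "l = 1"
    using MR \<open>0 < M\<close> by (auto simp: max_def algebra_simps split: if_splits)
  then show ?thesis by (simp add: y)
qed

lemma coordinatewise_convergent_subseq:
  fixes z :: "nat \<Rightarrow> nat \<Rightarrow> real"
  assumes "\<forall>n k. \<bar>z n k\<bar> \<le> B"
  obtains r y where "strict_mono r" "\<And>k. (\<lambda>n. z (r n) k) \<longlonglongrightarrow> y k"
proof -
  define K where "K = PiE (UNIV :: nat set) (\<lambda>_. {-B..B})"
  have "compactin (product_topology (\<lambda>_. euclidean) UNIV) K"
    unfolding K_def by (subst compactin_PiE) auto
  then have "seq_compact K"
    by (simp add: euclidean_product_topology compact_imp_seq_compact)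
  moreover have "\<forall>n. z n \<in> K" using assms by (auto simp: K_def abs_le_iff minus_le_iff)
  ultimately obtain y r where "strict_mono r" "(z \<circ> r) \<longlonglongrightarrow> y"
    by (meson seq_compactE)
  moreover have "(\<lambda>n. z (r n) k) \<longlonglongrightarrow> y k" for k
  proof -
    have "limitin (product_topology (\<lambda>_. euclidean) UNIV) (z \<circ> r) y sequentially"
      using \<open>(z \<circ> r) \<longlonglongrightarrow> y\<close> by (simp add: euclidean_product_topology)
    then show ?thesis by (simp add: limitin_componentwise)
  qed
  ultimately show ?thesis using that by blast
qed

lemma coordinatewise_tendsto:
  assumes P: "read_params u a"
    and x: "x \<in> c0" "read_norm u a x = 1"
    and xs: "\<forall>n. xs n \<in> c0" "\<forall>n. read_norm u a (xs n) = 1"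
    and lim: "(\<lambda>n. read_norm u a (\<lambda>k. x k + xs n k)) \<longlonglongrightarrow> 2"
  shows "(\<lambda>n. xs n k) \<longlonglongrightarrow> x k"
proof (rule ccontr)
  assume "\<not> (\<lambda>n. xs n k) \<longlonglongrightarrow> x k"
  then obtain e where "0 < e" and "\<forall>N. \<exists>n\<ge>N. e \<le> \<bar>xs n k - x k\<bar>"
    unfolding LIMSEQ_iff by (auto simp: not_less)
  then have "infinite {n. e \<le> \<bar>xs n k - x k\<bar>}"
    by (simp add: infinite_nat_iff_unbounded_le)
  then obtain \<sigma> :: "nat \<Rightarrow> nat"
    where \<sigma>: "strict_mono \<sigma>" "\<forall>n. \<sigma> n \<in> {n. e \<le> \<bar>xs n k - x k\<bar>}"
    by (metis infinite_enumerate)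
  have bounded: "\<forall>n i. \<bar>xs (\<sigma> n) i\<bar> \<le> 1" using read_norm_one_bounded[OF P] xs by blast
  obtain \<rho> y where \<rho>: "strict_mono \<rho>" "\<And>i. (\<lambda>n. xs (\<sigma> (\<rho> n)) i) \<longlonglongrightarrow> y i"
    using coordinatewise_convergent_subseq[OF bounded] by blast
  have "(\<lambda>n. read_norm u a (\<lambda>i. x i + xs (\<sigma> (\<rho> n)) i)) \<longlonglongrightarrow> 2"
    using LIMSEQ_subseq_LIMSEQ[OF lim strict_mono_o[OF \<sigma>(1) \<rho>(1)]] by (simp add: o_def)
  then have "y = x"
    using coordinatewise_limit_eq[OF P x _ _ _ \<rho>(2)] xs by simp
  then have "(\<lambda>n. \<bar>xs (\<sigma> (\<rho> n)) k - x k\<bar>) \<longlonglongrightarrow> 0"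
    using \<rho>(2)[of k] by (simp add: LIM_zero tendsto_rabs_zero)
  moreover have "\<forall>n. e \<le> \<bar>xs (\<sigma> (\<rho> n)) k - x k\<bar>" using \<sigma>(2) by simp
  ultimately have "e \<le> 0" by (intro LIMSEQ_le_const) auto
  then show False using \<open>0 < e\<close> by simp
qed

section \<open>Bounded functionals on Read's space\<close>

definition truncation :: "nat \<Rightarrow> (nat \<Rightarrow> real) \<Rightarrow> nat \<Rightarrow> real" where
  "truncation N w = (\<lambda>i. if i < N then w i else 0)"

definition unit_seq :: "nat \<Rightarrow> nat \<Rightarrow> real" where
  "unit_seq k = (\<lambda>i. if i = k then 1 else 0)"

lemma eventually_zero_in_c0: "\<forall>i\<ge>N. w i = 0 \<Longrightarrow> w \<in> c0"
  unfolding c0_def mem_Collect_eq by (rule tendsto_eventually) (auto simp: eventually_sequentially)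

lemma truncation_in_c0: "truncation N w \<in> c0"
  by (rule eventually_zero_in_c0[of N]) (simp add: truncation_def)

lemma unit_seq_in_c0: "unit_seq k \<in> c0"
  by (rule eventually_zero_in_c0[of "Suc k"]) (simp add: unit_seq_def)

lemma read_dual_add:
  "f \<in> read_dual u a \<Longrightarrow> y \<in> c0 \<Longrightarrow> z \<in> c0 \<Longrightarrow> f (\<lambda>k. y k + z k) = f y + f z"
  by (simp add: read_dual_def)

lemma read_dual_scale: "f \<in> read_dual u a \<Longrightarrow> y \<in> c0 \<Longrightarrow> f (\<lambda>k. c * y k) = c * f y"
  by (simp add: read_dual_def)

lemma read_dual_bound:
  assumes "f \<in> read_dual u a" "read_params u a"
  obtains C where "\<And>y S. y \<in> c0 \<Longrightarrow> \<forall>k. \<bar>y k\<bar> \<le> S \<Longrightarrow> \<bar>f y\<bar> \<le> C * S"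
proof -
  obtain C where C: "\<forall>y\<in>c0. \<bar>f y\<bar> \<le> C * read_norm u a y"
    using assms(1) by (auto simp: read_dual_def)
  have "\<bar>f y\<bar> \<le> (5 * max C 0) * S" if y: "y \<in> c0" "\<forall>k. \<bar>y k\<bar> \<le> S" for y S
  proof -
    have "\<bar>f y\<bar> \<le> max C 0 * read_norm u a y"
      using C y(1) read_norm_nonneg[OF assms(2) y(2)]
      by (meson max.cobounded1 mult_right_mono order_trans)
    also have "\<dots> \<le> max C 0 * (5 * S)"
      by (intro mult_left_mono read_norm_le[OF assms(2) y(2)]) simp
    finally show ?thesis by simp
  qed
  then show ?thesis using that by blast
qed

lemma read_dual_truncation:
  assumes f: "f \<in> read_dual u a"
  shows "f (truncation N w) = (\<Sum>k<N. f (unit_seq k) * w k)"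
proof (induction N)
  case 0
  from read_dual_scale[OF f unit_seq_in_c0, of 0 0] show ?case by (simp add: truncation_def)
next
  case (Suc N)
  have split: "truncation (Suc N) w = (\<lambda>i. truncation N w i + w N * unit_seq N i)"
    by (auto simp: truncation_def unit_seq_def less_Suc_eq)
  have "(\<lambda>i. w N * unit_seq N i) \<in> c0"
    by (rule eventually_zero_in_c0[of "Suc N"]) (simp add: unit_seq_def)
  from read_dual_add[OF f truncation_in_c0 this] show ?case
    using read_dual_scale[OF f unit_seq_in_c0] Suc.IH by (simp add: split)
qed

lemma read_dual_sums:
  assumes f: "f \<in> read_dual u a" and P: "read_params u a" and w: "w \<in> c0"
  shows "(\<lambda>k. f (unit_seq k) * w k) sums f w"
  unfolding sums_def LIMSEQ_iff
proof (intro allI impI)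
  fix r :: real assume "0 < r"
  obtain C where C: "\<And>y S. y \<in> c0 \<Longrightarrow> \<forall>k. \<bar>y k\<bar> \<le> S \<Longrightarrow> \<bar>f y\<bar> \<le> C * S"
    using read_dual_bound[OF f P] by blast
  \<comment> \<open>\<open>f w\<close> minus a partial sum is \<open>f\<close> applied to the tail of \<open>w\<close>, which is uniformly small\<close>
  define \<delta> where "\<delta> = r / (2 * (\<bar>C\<bar> + 1))"
  have "0 < \<delta>" using \<open>0 < r\<close> by (simp add: \<delta>_def add_pos_nonneg)
  then obtain N0 where N0: "\<forall>i\<ge>N0. \<bar>w i\<bar> < \<delta>" using w unfolding c0_def LIMSEQ_iff by auto
  have "\<bar>(\<Sum>k<N. f (unit_seq k) * w k) - f w\<bar> < r" if "N0 \<le> N" for N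
  proof -
    define tail where "tail i = w i - truncation N w i" for i
    have "tail \<in> c0"
      using w truncation_in_c0[of N w] unfolding tail_def c0_def by (auto intro: tendsto_eq_intros)
    have "f w = f (truncation N w) + f tail"
      using read_dual_add[OF f truncation_in_c0[of N w] \<open>tail \<in> c0\<close>] by (simp add: tail_def)
    moreover have "\<bar>f tail\<bar> \<le> C * \<delta>"
      using N0 that by (intro C[OF \<open>tail \<in> c0\<close>]) (auto simp: tail_def truncation_def less_imp_le)
    moreover have "C * \<delta> \<le> (\<bar>C\<bar> + 1) * \<delta>"
      using \<open>0 < \<delta>\<close> by (intro mult_right_mono) auto
    moreover have "(\<bar>C\<bar> + 1) * \<delta> = r / 2"
      using abs_ge_zero[of C] unfolding \<delta>_def by (simp add: field_simps)
    ultimately show ?thesis using read_dual_truncation[OF f] \<open>0 < r\<close> by simp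
  qed
  then show "\<exists>N0. \<forall>N\<ge>N0. norm ((\<Sum>k<N. f (unit_seq k) * w k) - f w) < r" by auto
qed

lemma summable_read_dual_coeffs:
  assumes f: "f \<in> read_dual u a" and P: "read_params u a"
  shows "summable (\<lambda>k. \<bar>f (unit_seq k)\<bar>)"
proof -
  obtain C where C: "\<And>y S. y \<in> c0 \<Longrightarrow> \<forall>k. \<bar>y k\<bar> \<le> S \<Longrightarrow> \<bar>f y\<bar> \<le> C * S"
    using read_dual_bound[OF f P] by blast
  show ?thesis
  proof (rule summableI_nonneg_bounded)
    fix N
    \<comment> \<open>test \<open>f\<close> against the truncated sign pattern of its coefficients\<close>
    have "(\<Sum>k<N. \<bar>f (unit_seq k)\<bar>) = f (truncation N (\<lambda>k. sgn (f (unit_seq k))))"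
      by (simp add: read_dual_truncation[OF f] abs_sgn)
    also have "\<dots> \<le> C * 1"
    proof -
      have "\<forall>k. \<bar>truncation N (\<lambda>k. sgn (f (unit_seq k))) k\<bar> \<le> 1"
        by (simp add: truncation_def abs_sgn_eq)
      from C[OF truncation_in_c0 this] show ?thesis by (simp add: abs_le_iff)
    qed
    finally show "(\<Sum>k<N. \<bar>f (unit_seq k)\<bar>) \<le> C" by simp
  qed simp
qed

lemma read_dual_tendsto_zero:
  assumes f: "f \<in> read_dual u a" and P: "read_params u a"
    and d: "\<forall>n. d n \<in> c0" "\<forall>n k. \<bar>d n k\<bar> \<le> B" "\<And>k. (\<lambda>n. d n k) \<longlonglongrightarrow> 0"
  shows "(\<lambda>n. f (d n)) \<longlonglongrightarrow> 0"
proof -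
  have "(\<lambda>n. \<Sum>k. f (unit_seq k) * d n k) \<longlonglongrightarrow> (\<Sum>k. f (unit_seq k) * 0)"
  proof (rule tannerys_theorem[THEN conjunct2, THEN conjunct2])
    show "(\<lambda>n. f (unit_seq k) * d n k) \<longlonglongrightarrow> f (unit_seq k) * 0" for k
      by (intro tendsto_intros d)
    show "\<forall>\<^sub>F (k, n) in sequentially \<times>\<^sub>F sequentially.
        norm (f (unit_seq k) * d n k) \<le> \<bar>f (unit_seq k)\<bar> * B"
      using d(2) by (intro always_eventually) (auto simp: abs_mult intro: mult_left_mono)
    show "summable (\<lambda>k. \<bar>f (unit_seq k)\<bar> * B)"
      by (intro summable_mult2 summable_read_dual_coeffs[OF f P])
  qed auto
  then show ?thesis
    using read_dual_sums[OF f P] d(1) by (simp add: sums_iff)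
qed

theorem theorem2p9:
  fixes u :: "nat \<Rightarrow> nat \<Rightarrow> rat" and a :: "nat \<Rightarrow> nat"
    and x :: "nat \<Rightarrow> real" and xs :: "nat \<Rightarrow> nat \<Rightarrow> real"
  assumes "read_params u a"
    and "x \<in> c0" and "read_norm u a x = 1"
    and "\<forall>n. xs n \<in> c0" and "\<forall>n. read_norm u a (xs n) = 1"
    and "(\<lambda>n. read_norm u a (\<lambda>k. x k + xs n k)) \<longlonglongrightarrow> 2"
  shows "read_weakly_conv u a xs x"
  unfolding read_weakly_conv_def
proof
  fix f assume f: "f \<in> read_dual u a"
  define d where "d n k = xs n k - x k" for n k
  have d_c0: "\<forall>n. d n \<in> c0"
    using assms(2,4) unfolding d_def c0_def by (auto intro: tendsto_eq_intros)
  have "\<bar>d n k\<bar> \<le> 2" for n k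
  proof -
    have "\<bar>x k\<bar> \<le> 1" "\<bar>xs n k\<bar> \<le> 1"
      using read_norm_one_bounded[OF assms(1-3)] read_norm_one_bounded[OF assms(1)] assms(4,5)
      by blast+
    then show ?thesis by (auto simp: d_def abs_le_iff)
  qed
  moreover have "\<And>k. (\<lambda>n. d n k) \<longlonglongrightarrow> 0"
    unfolding d_def by (intro LIM_zero coordinatewise_tendsto[OF assms])
  ultimately have "(\<lambda>n. f x + f (d n)) \<longlonglongrightarrow> f x + 0"
    by (intro tendsto_add tendsto_const read_dual_tendsto_zero[OF f assms(1) d_c0]) auto
  moreover have "f (xs n) = f x + f (d n)" for n
    using read_dual_add[OF f assms(2) d_c0[rule_format, of n]] by (simp add: d_def)
  ultimately show "(\<lambda>n. f (xs n)) \<longlonglongrightarrow> f x" by simp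
qed

end
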